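(* Let $L$ be a semiprime right Leibniz algebra. Then $\mathrm{Ann}(L)=\mathrm{ran}(L)=\{0\}$.
   Context: A right Leibniz algebra satisfies $[x,[y,z]]=[[x,y],z]-[[x,z],y]$. Ideals: subspaces $I$ with $[I,L]\subseteq I$, $[L,I]\subseteq I$. $L$ is semiprime if $[I,I]\ne\{0\}$ for every nonzero ideal $I$. $\mathrm{ran}(L)=\{x\in L:[y,x]=0\ \forall y\in L\}$, $\mathrm{lan}(L)=\{x\in L:[x,y]=0\ \forall y\in L\}$, $\mathrm{Ann}(L)=\mathrm{lan}(L)\cap\mathrm{ran}(L)$. *)

theory Defs
  imports Complex_Main
begin

definition right_leibniz_algebra ::
  "('k::field \<Rightarrow> 'v::ab_group_add \<Rightarrow> 'v) \<Rightarrow> ('v \<Rightarrow> 'v \<Rightarrow> 'v) \<Rightarrow> bool" where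
  "right_leibniz_algebra scale b \<longleftrightarrow>
     vector_space scale \<and>
     (\<forall>x y z. b (x + y) z = b x z + b y z) \<and>
     (\<forall>x y z. b x (y + z) = b x y + b x z) \<and>
     (\<forall>c x y. b (scale c x) y = scale c (b x y)) \<and>
     (\<forall>c x y. b x (scale c y) = scale c (b x y)) \<and>
     (\<forall>x y z. b x (b y z) = b (b x y) z - b (b x z) y)"

definition lideal ::
  "('k::field \<Rightarrow> 'v::ab_group_add \<Rightarrow> 'v) \<Rightarrow> ('v \<Rightarrow> 'v \<Rightarrow> 'v) \<Rightarrow> 'v set \<Rightarrow> bool" where
  "lideal scale b I \<longleftrightarrow> module.subspace scale I \<and>
     (\<forall>x\<in>I. \<forall>y. b x y \<in> I) \<and> (\<forall>x\<in>I. \<forall>y. b y x \<in> I)"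

definition bracket_set ::
  "('k::field \<Rightarrow> 'v::ab_group_add \<Rightarrow> 'v) \<Rightarrow> ('v \<Rightarrow> 'v \<Rightarrow> 'v) \<Rightarrow> 'v set \<Rightarrow> 'v set \<Rightarrow> 'v set" where
  "bracket_set scale b I J = module.span scale {b x y | x y. x \<in> I \<and> y \<in> J}"

definition semiprime ::
  "('k::field \<Rightarrow> 'v::ab_group_add \<Rightarrow> 'v) \<Rightarrow> ('v \<Rightarrow> 'v \<Rightarrow> 'v) \<Rightarrow> bool" where
  "semiprime scale b \<longleftrightarrow>
     (\<forall>I. lideal scale b I \<and> I \<noteq> {0} \<longrightarrow> bracket_set scale b I I \<noteq> {0})"

definition ran :: "('v \<Rightarrow> 'v \<Rightarrow> 'v::zero) \<Rightarrow> 'v set" where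
  "ran b = {x. \<forall>y. b y x = 0}"

definition lan :: "('v \<Rightarrow> 'v \<Rightarrow> 'v::zero) \<Rightarrow> 'v set" where
  "lan b = {x. \<forall>y. b x y = 0}"

definition Ann :: "('v \<Rightarrow> 'v \<Rightarrow> 'v::zero) \<Rightarrow> 'v set" where
  "Ann b = lan b \<inter> ran b"

end

theory Submission
  imports Defs
begin

text \<open>The right annihilator ran(L) is an ideal: [y,x] = 0 for x in ran(L), and
  [w,[x,y]] = [[w,x],y] - [[w,y],x] = 0 by the Leibniz identity. Every bracket with
  an element of ran(L) on the right vanishes, so [ran(L), ran(L)] = 0 and semiprimeness
  forces ran(L) = 0; finally 0 \<in> Ann(L) \<subseteq> ran(L).\<close>

lemma right_leibniz_algebraD:
  assumes "right_leibniz_algebra scale b"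
  shows "vector_space scale"
    and "b (x + y) z = b x z + b y z"
    and "b x (y + z) = b x y + b x z"
    and "b x (scale c y) = scale c (b x y)"
    and "b x (b y z) = b (b x y) z - b (b x z) y"
  using assms unfolding right_leibniz_algebra_def by blast+

lemma right_leibniz_algebra_bracket_zero:
  assumes "right_leibniz_algebra scale b"
  shows "b x 0 = 0" and "b 0 x = 0"
  using right_leibniz_algebraD(3)[OF assms, of x 0 0]
    right_leibniz_algebraD(2)[OF assms, of 0 0 x] by simp_all

lemma zero_in_ran_lan:
  assumes "right_leibniz_algebra scale b"
  shows "0 \<in> ran b" and "0 \<in> lan b"
  unfolding ran_def lan_def using right_leibniz_algebra_bracket_zero[OF assms] by simp_all

lemma lideal_ran:
  assumes L: "right_leibniz_algebra scale b"
  shows "lideal scale b (ran b)"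
proof -
  interpret vector_space scale by (rule right_leibniz_algebraD(1)[OF L])
  note zero = right_leibniz_algebra_bracket_zero[OF L]
  have "subspace (ran b)"
    unfolding subspace_def ran_def
    by (simp add: zero right_leibniz_algebraD(3,4)[OF L])
  moreover have "b x y \<in> ran b" if x: "x \<in> ran b" for x y
  proof -
    have "b w (b x y) = 0" for w
    proof -
      have "b w (b x y) = b (b w x) y - b (b w y) x"
        by (rule right_leibniz_algebraD(5)[OF L])
      also have "\<dots> = 0"
        using x zero by (simp add: ran_def)
      finally show ?thesis .
    qed
    then show ?thesis by (simp add: ran_def)
  qed
  moreover have "b y x \<in> ran b" if "x \<in> ran b" for x y
    using that zero by (simp add: ran_def)
  ultimately show ?thesis
    unfolding lideal_def by blast
qed

lemma bracket_set_ran_right: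
  assumes "vector_space scale" and "J \<subseteq> ran b"
  shows "bracket_set scale b I J = {0}"
proof -
  interpret vector_space scale by (rule assms(1))
  have "{b x y | x y. x \<in> I \<and> y \<in> J} \<subseteq> {0}"
    using assms(2) by (auto simp: ran_def)
  then have "span {b x y | x y. x \<in> I \<and> y \<in> J} \<subseteq> {0}"
    by (rule span_minimal) (simp add: subspace_single_0)
  then show ?thesis
    unfolding bracket_set_def using span_zero by blast
qed

lemma semiprime_ran_eq_zero:
  assumes L: "right_leibniz_algebra scale b" and "semiprime scale b"
  shows "ran b = {0}"
  using assms(2) lideal_ran[OF L]
    bracket_set_ran_right[OF right_leibniz_algebraD(1)[OF L], of "ran b" b "ran b"]
  unfolding semiprime_def by blast

theorem proposition2p6:
  fixes scale :: "'k::field \<Rightarrow> 'v::ab_group_add \<Rightarrow> 'v"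
    and b :: "'v \<Rightarrow> 'v \<Rightarrow> 'v"
  assumes "right_leibniz_algebra scale b"
    and "semiprime scale b"
  shows "Ann b = {0} \<and> ran b = {0}"
proof -
  have ran: "ran b = {0}"
    by (rule semiprime_ran_eq_zero[OF assms])
  moreover have "Ann b = {0}"
    using ran zero_in_ran_lan[OF assms(1)] unfolding Ann_def by blast
  ultimately show ?thesis by blast
qed

end
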